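(* Let $\Omega\subset\mathbb{R}^n$ be a domain, $\mathcal{S}$ any basis of shapes in $\Omega$, $1\le p<\infty$, and $f_1,f_2$ real-valued functions in $\mathrm{BMO}^p_{\mathcal{S}}(\Omega)$. Then $\max(f_1,f_2)$ and $\min(f_1,f_2)$ belong to $\mathrm{BMO}^p_{\mathcal{S}}(\Omega)$ with $$\|\max(f_1,f_2)\|_{\mathrm{BMO}^p_{\mathcal{S}}}\le\frac{1+c_{|\cdot|}(p,\mathcal{S})}{2}\big(\|f_1\|_{\mathrm{BMO}^p_{\mathcal{S}}}+\|f_2\|_{\mathrm{BMO}^p_{\mathcal{S}}}\big),$$ and the same bound for $\|\min(f_1,f_2)\|_{\mathrm{BMO}^p_{\mathcal{S}}}$.
   Context: A domain is an open connected set. A shape is an open set with $0<|S|<\infty$; a basis of shapes in $\Omega$ is a collection of shapes contained in $\Omega$ covering $\Omega$. For $f\in L^1(S)$, $f_S=\frac1{|S|}\int_Sf$. $\mathrm{BMO}^p_{\mathcal{S}}(\Omega)$ is the space of $f$ with $f\in L^1(S)$ for all $S\in\mathcal{S}$ and $\|f\|_{\mathrm{BMO}^p_{\mathcal{S}}}:=\sup_{S\in\mathcal{S}}\big(\frac1{|S|}\int_S|f-f_S|^p\big)^{1/p}<\infty$. $c_{|\cdot|}(p,\mathcal{S})$ denotes the smallest constant $c$ such that $\||f|\|_{\mathrm{BMO}^p_{\mathcal{S}}}\le c\|f\|_{\mathrm{BMO}^p_{\mathcal{S}}}$ for all real-valued $f\in\mathrm{BMO}^p_{\mathcal{S}}(\Omega)$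 (it is known that $1\le c_{|\cdot|}(p,\mathcal{S})\le2$). *)

theory Defs
  imports "HOL-Analysis.Analysis"
begin

definition is_domain :: "'a::euclidean_space set \<Rightarrow> bool" where
  "is_domain \<Omega> \<longleftrightarrow> open \<Omega> \<and> connected \<Omega> \<and> \<Omega> \<noteq> {}"

definition is_shape :: "'a::euclidean_space set \<Rightarrow> bool" where
  "is_shape S \<longleftrightarrow> open S \<and> 0 < emeasure lebesgue S \<and> emeasure lebesgue S < \<infinity>"

definition basis_of_shapes :: "'a::euclidean_space set set \<Rightarrow> 'a set \<Rightarrow> bool" where
  "basis_of_shapes \<SS> \<Omega> \<longleftrightarrow> (\<forall>S\<in>\<SS>. is_shape S \<and> S \<subseteq> \<Omega>) \<and> \<Union>\<SS> = \<Omega>"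

definition avg :: "'a::euclidean_space set \<Rightarrow> ('a \<Rightarrow> real) \<Rightarrow> real" where
  "avg S f = (LINT x:S|lebesgue. f x) / measure lebesgue S"

definition mean_osc :: "real \<Rightarrow> 'a::euclidean_space set \<Rightarrow> ('a \<Rightarrow> real) \<Rightarrow> ennreal" where
  "mean_osc p S f = (\<integral>\<^sup>+ x\<in>S. ennreal (\<bar>f x - avg S f\<bar> powr p) \<partial>lebesgue) / emeasure lebesgue S"

definition in_BMO :: "real \<Rightarrow> 'a::euclidean_space set set \<Rightarrow> ('a \<Rightarrow> real) \<Rightarrow> bool" where
  "in_BMO p \<SS> f \<longleftrightarrow> (\<forall>S\<in>\<SS>. set_integrable lebesgue S f) \<and>
     (\<exists>C::real. \<forall>S\<in>\<SS>. mean_osc p S f \<le> ennreal C)"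

text \<open>The BMO^p_S seminorm (meaningful for f in BMO^p_S and nonempty basis).\<close>
definition BMO_norm :: "real \<Rightarrow> 'a::euclidean_space set set \<Rightarrow> ('a \<Rightarrow> real) \<Rightarrow> real" where
  "BMO_norm p \<SS> f = (SUP S\<in>\<SS>. enn2real (mean_osc p S f) powr (1 / p))"

definition c_abs :: "real \<Rightarrow> 'a::euclidean_space set set \<Rightarrow> real" where
  "c_abs p \<SS> = Inf {c. \<forall>f. in_BMO p \<SS> f \<longrightarrow>
       BMO_norm p \<SS> (\<lambda>x. \<bar>f x\<bar>) \<le> c * BMO_norm p \<SS> f}"

end

(* Since max(f1,f2) = (f1+f2)/2 + |f1-f2|/2 and min(f1,f2) = (f1+f2)/2 - |f1-f2|/2, it suffices
   that the BMO seminorm is subadditive and absolutely homogeneous and that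
   || |f1-f2| || <= c_abs ||f1-f2|| <= c_abs (||f1|| + ||f2||).
   On a shape S the mean oscillation of f is the p-th central absolute moment of f under normalized
   Lebesgue measure on S, a probability measure; subadditivity is then Minkowski's inequality.
   The bound || |f| || <= 2 ||f||, which makes c_abs the infimum of a nonempty set, follows from
   |E g| <= ||g||_p applied to g = |f| - |E f|. *)

theory Submission
  imports Defs "HOL-Probability.Probability_Measure"
begin

lemma convex_on_powr_nonneg:
  assumes "1 \<le> p"
  shows "convex_on {0..} (\<lambda>x::real. x powr p)"
proof
  fix t x y :: real
  assume t: "0 < t" "t < 1" and xy: "x \<in> {0..}" "y \<in> {0..}"
  have scaled: "(s * z) powr p \<le> s * z powr p" if "0 \<le> s" "s \<le> 1" "0 \<le> z" for s z :: real
  proof -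
    have "s powr p \<le> s"
      using that assms by (metis powr_mono' powr_one_gt_zero_iff)
    then show ?thesis
      using that by (simp add: powr_mult mult_right_mono)
  qed
  show "((1 - t) *\<^sub>R x + t *\<^sub>R y) powr p \<le> (1 - t) * x powr p + t * y powr p"
  proof (cases "x = 0 \<or> y = 0")
    case True
    then show ?thesis
      using scaled[of "1 - t" x] scaled[of t y] t xy assms by auto
  next
    case False
    then show ?thesis
      using convex_onD[OF powr_convex[OF assms], of t x y] t xy by auto
  qed
qed simp

text \<open>Convexity of \<open>x powr p\<close> at \<open>(u + v) / (A + B) = A / (A + B) * (u / A) + B / (A + B) * (v / B)\<close>;
  integrated, this is Minkowski's inequality.\<close>

lemma powr_add_le_weighted:
  fixes u v A B p :: real
  assumes p: "1 \<le> p" and uv: "0 \<le> u" "0 \<le> v" and AB: "0 < A" "0 < B"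
  shows "(u + v) powr p \<le> (A + B) powr (p - 1) * (A powr (1 - p) * u powr p + B powr (1 - p) * v powr p)"
proof -
  define t where "t = B / (A + B)"
  have t: "0 \<le> t" "t \<le> 1" and one_minus_t: "1 - t = A / (A + B)"
    using AB by (auto simp: t_def field_simps)
  have "(u + v) / (A + B) = (1 - t) * (u / A) + t * (v / B)"
    unfolding one_minus_t using AB by (simp add: t_def add_divide_distrib)
  then have "((u + v) / (A + B)) powr p \<le> (1 - t) * (u / A) powr p + t * (v / B) powr p"
    using convex_onD[OF convex_on_powr_nonneg[OF p], of t "u / A" "v / B"] t uv AB by simp
  also have "\<dots> = (A powr (1 - p) * u powr p + B powr (1 - p) * v powr p) / (A + B)"
    unfolding one_minus_t using AB uv by (simp add: t_def powr_divide powr_diff add_divide_distrib mult.commute)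
  finally have "(u + v) powr p / (A + B) powr p
      \<le> (A powr (1 - p) * u powr p + B powr (1 - p) * v powr p) / (A + B)"
    using AB uv by (simp add: powr_divide)
  then show ?thesis
    using AB by (simp add: powr_diff field_simps)
qed

definition abs_moment :: "real \<Rightarrow> 'a measure \<Rightarrow> ('a \<Rightarrow> real) \<Rightarrow> ennreal" where
  "abs_moment p M g = (\<integral>\<^sup>+x. ennreal (\<bar>g x\<bar> powr p) \<partial>M)"

text \<open>When the moment is infinite, \<^const>\<open>enn2real\<close> turns the norm into 0, so finiteness of the
  moment is carried as a separate hypothesis.\<close>

definition Lp_norm :: "real \<Rightarrow> 'a measure \<Rightarrow> ('a \<Rightarrow> real) \<Rightarrow> real" where
  "Lp_norm p M g = enn2real (abs_moment p M g) powr (1 / p)"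

lemma Lp_norm_nonneg: "0 \<le> Lp_norm p M g"
  by (simp add: Lp_norm_def)

lemma abs_moment_le_powr_iff:
  assumes fin: "abs_moment p M g < \<infinity>" and p: "0 < p" and A: "0 \<le> A"
  shows "abs_moment p M g \<le> ennreal (A powr p) \<longleftrightarrow> Lp_norm p M g \<le> A"
proof -
  obtain r where r: "abs_moment p M g = ennreal r" "0 \<le> r"
    using fin by (cases "abs_moment p M g") auto
  have "r \<le> A powr p \<longleftrightarrow> r powr (1 / p) \<le> (A powr p) powr (1 / p)"
    using p r(2) by (smt (verit) powr_less_mono2 powr_mono2 powr_ge_zero divide_pos_pos zero_less_one)
  then show ?thesis
    using r p A by (simp add: Lp_norm_def powr_powr)
qed

lemma abs_moment_add_le:
  assumes [measurable]: "g \<in> borel_measurable M" "h \<in> borel_measurable M"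
    and p: "1 \<le> p" and AB: "0 < A" "0 < B"
    and g: "abs_moment p M g \<le> ennreal (A powr p)" and h: "abs_moment p M h \<le> ennreal (B powr p)"
  shows "abs_moment p M (\<lambda>x. g x + h x) \<le> ennreal ((A + B) powr p)"
proof -
  define a where "a = (A + B) powr (p - 1) * A powr (1 - p)"
  define b where "b = (A + B) powr (p - 1) * B powr (1 - p)"
  have ab: "0 \<le> a" "0 \<le> b"
    by (simp_all add: a_def b_def)
  have pointwise: "\<bar>g x + h x\<bar> powr p \<le> a * \<bar>g x\<bar> powr p + b * \<bar>h x\<bar> powr p" for x
  proof -
    have "\<bar>g x + h x\<bar> powr p \<le> (\<bar>g x\<bar> + \<bar>h x\<bar>) powr p"
      using p by (intro powr_mono2) auto
    also have "\<dots> \<le> a * \<bar>g x\<bar> powr p + b * \<bar>h x\<bar> powr p"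
      using powr_add_le_weighted[OF p _ _ AB, of "\<bar>g x\<bar>" "\<bar>h x\<bar>"]
      by (simp add: a_def b_def algebra_simps)
    finally show ?thesis .
  qed
  have "abs_moment p M (\<lambda>x. g x + h x)
      \<le> (\<integral>\<^sup>+x. ennreal a * ennreal (\<bar>g x\<bar> powr p) + ennreal b * ennreal (\<bar>h x\<bar> powr p) \<partial>M)"
    unfolding abs_moment_def using pointwise ab
    by (intro nn_integral_mono) (simp flip: ennreal_plus ennreal_mult)
  also have "\<dots> = ennreal a * abs_moment p M g + ennreal b * abs_moment p M h"
    unfolding abs_moment_def by (simp add: nn_integral_add nn_integral_cmult)
  also have "\<dots> \<le> ennreal a * ennreal (A powr p) + ennreal b * ennreal (B powr p)"
    by (intro add_mono mult_left_mono g h) auto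
  also have "\<dots> = ennreal (a * A powr p + b * B powr p)"
    using ab by (simp flip: ennreal_plus ennreal_mult)
  also have "a * A powr p + b * B powr p = (A + B) powr (p - 1) * (A + B)"
  proof -
    have "A powr (1 - p) * A powr p = A" "B powr (1 - p) * B powr p = B"
      using AB by (simp_all flip: powr_add)
    then show ?thesis
      by (simp add: a_def b_def distrib_left mult.assoc)
  qed
  also have "(A + B) powr (p - 1) * (A + B) = (A + B) powr p"
    using AB by (simp add: powr_diff)
  finally show ?thesis .
qed

lemma
  assumes [measurable]: "g \<in> borel_measurable M" "h \<in> borel_measurable M"
    and p: "1 \<le> p" and g: "abs_moment p M g < \<infinity>" and h: "abs_moment p M h < \<infinity>"
  shows abs_moment_add_less_top: "abs_moment p M (\<lambda>x. g x + h x) < \<infinity>"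
    and Lp_norm_add_le: "Lp_norm p M (\<lambda>x. g x + h x) \<le> Lp_norm p M g + Lp_norm p M h"
proof -
  have bound: "abs_moment p M (\<lambda>x. g x + h x)
      \<le> ennreal ((Lp_norm p M g + e + (Lp_norm p M h + e)) powr p)" if "0 < e" for e
  proof (rule abs_moment_add_le)
    show "0 < Lp_norm p M g + e" "0 < Lp_norm p M h + e"
      using that Lp_norm_nonneg[of p M] by (auto intro: add_nonneg_pos)
    show "abs_moment p M g \<le> ennreal ((Lp_norm p M g + e) powr p)"
      "abs_moment p M h \<le> ennreal ((Lp_norm p M h + e) powr p)"
      using g h p that Lp_norm_nonneg[of p M] by (simp_all add: abs_moment_le_powr_iff)
  qed (use p in auto)
  show fin: "abs_moment p M (\<lambda>x. g x + h x) < \<infinity>"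
    using bound[of 1] by (simp add: le_less_trans)
  show "Lp_norm p M (\<lambda>x. g x + h x) \<le> Lp_norm p M g + Lp_norm p M h"
  proof (rule field_le_epsilon)
    fix e :: real
    assume "0 < e"
    define A where "A = Lp_norm p M g + e / 2 + (Lp_norm p M h + e / 2)"
    have "0 \<le> A"
      using \<open>0 < e\<close> Lp_norm_nonneg[of p M] by (simp add: A_def)
    moreover have "abs_moment p M (\<lambda>x. g x + h x) \<le> ennreal (A powr p)"
      using bound[of "e / 2"] \<open>0 < e\<close> by (simp add: A_def)
    ultimately have "Lp_norm p M (\<lambda>x. g x + h x) \<le> A"
      using abs_moment_le_powr_iff[OF fin] p by simp
    then show "Lp_norm p M (\<lambda>x. g x + h x) \<le> Lp_norm p M g + Lp_norm p M h + e"
      by (simp add: A_def)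
  qed
qed

lemma abs_moment_mono:
  assumes "\<And>x. x \<in> space M \<Longrightarrow> \<bar>g x\<bar> \<le> \<bar>h x\<bar>" and "0 \<le> p"
  shows "abs_moment p M g \<le> abs_moment p M h"
  unfolding abs_moment_def using assms by (intro nn_integral_mono ennreal_leI powr_mono2) auto

lemma Lp_norm_mono:
  assumes "\<And>x. x \<in> space M \<Longrightarrow> \<bar>g x\<bar> \<le> \<bar>h x\<bar>" and "0 < p" and "abs_moment p M h < \<infinity>"
  shows "Lp_norm p M g \<le> Lp_norm p M h"
proof -
  have "abs_moment p M g \<le> abs_moment p M h"
    using assms by (intro abs_moment_mono) auto
  then have "enn2real (abs_moment p M g) \<le> enn2real (abs_moment p M h)"
    using assms(3) by (intro enn2real_mono) auto
  then show ?thesis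
    unfolding Lp_norm_def using assms(2) by (intro powr_mono2) auto
qed

lemma abs_moment_cmult:
  assumes "g \<in> borel_measurable M" and "0 < p"
  shows "abs_moment p M (\<lambda>x. c * g x) = ennreal (\<bar>c\<bar> powr p) * abs_moment p M g"
  unfolding abs_moment_def using assms
  by (simp add: abs_mult powr_mult ennreal_mult nn_integral_cmult)

lemma Lp_norm_cmult:
  assumes "g \<in> borel_measurable M" and "0 < p"
  shows "Lp_norm p M (\<lambda>x. c * g x) = \<bar>c\<bar> * Lp_norm p M g"
  unfolding Lp_norm_def abs_moment_cmult[OF assms] using assms(2)
  by (simp add: enn2real_mult powr_mult powr_powr)

lemma young_powr:
  fixes t L p :: real
  assumes "0 \<le> t" and "0 < L" and "1 \<le> p"
  shows "t \<le> L powr (1 - p) * t powr p / p + (1 - 1 / p) * L"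
proof (cases "t = 0")
  case True
  then show ?thesis
    using assms by (simp add: field_simps)
next
  case False
  then have "0 < t / L"
    using assms by simp
  then have "((t / L) powr p) powr (1 / p) * 1 powr (1 - 1 / p) \<le> (1 / p) * (t / L) powr p + (1 - 1 / p) * 1"
    using assms by (intro Youngs_inequality_0) auto
  then have "t / L \<le> (t / L) powr p / p + (1 - 1 / p)"
    using assms \<open>0 < t / L\<close> by (simp add: powr_powr)
  then have "t \<le> L * ((t / L) powr p / p + (1 - 1 / p))"
    using assms by (simp add: field_simps)
  also have "\<dots> = L powr (1 - p) * t powr p / p + (1 - 1 / p) * L"
    using assms by (simp add: powr_divide powr_diff field_simps)
  finally show ?thesis .
qed

context prob_space
begin

lemma Lp_norm_const:
  assumes "0 < p"
  shows "Lp_norm p M (\<lambda>_. k) = \<bar>k\<bar>"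
  using assms by (simp add: Lp_norm_def abs_moment_def emeasure_space_1 powr_powr)

lemma abs_moment_const_less_top: "abs_moment p M (\<lambda>_. k) < \<infinity>"
  by (simp add: abs_moment_def emeasure_space_1)

text \<open>Young's inequality, integrated with \<open>L\<close> just above the norm.\<close>

lemma nn_integral_abs_le_Lp_norm:
  assumes [measurable]: "g \<in> borel_measurable M"
    and p: "1 \<le> p" and fin: "abs_moment p M g < \<infinity>"
  shows "(\<integral>\<^sup>+x. ennreal \<bar>g x\<bar> \<partial>M) \<le> ennreal (Lp_norm p M g)"
proof (rule ennreal_le_epsilon)
  fix e :: real
  assume "0 < e"
  define L where "L = Lp_norm p M g + e"
  have L: "0 < L"
    using \<open>0 < e\<close> Lp_norm_nonneg[of p M g] by (simp add: L_def)
  define a where "a = L powr (1 - p) / p"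
  have a: "0 \<le> a" "0 \<le> (1 - 1 / p) * L"
    using L p by (simp_all add: a_def field_simps)
  have "(\<integral>\<^sup>+x. ennreal \<bar>g x\<bar> \<partial>M)
      \<le> (\<integral>\<^sup>+x. ennreal a * ennreal (\<bar>g x\<bar> powr p) + ennreal ((1 - 1 / p) * L) \<partial>M)"
  proof (intro nn_integral_mono)
    fix x
    have "ennreal \<bar>g x\<bar> \<le> ennreal (a * \<bar>g x\<bar> powr p + (1 - 1 / p) * L)"
      using young_powr[OF _ L p, of "\<bar>g x\<bar>"] by (simp add: a_def ennreal_leI)
    then show "ennreal \<bar>g x\<bar> \<le> ennreal a * ennreal (\<bar>g x\<bar> powr p) + ennreal ((1 - 1 / p) * L)"
      using a by (simp add: ennreal_mult ennreal_plus)
  qed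
  also have "\<dots> = ennreal a * abs_moment p M g + ennreal ((1 - 1 / p) * L)"
    unfolding abs_moment_def by (simp add: nn_integral_add nn_integral_cmult emeasure_space_1)
  also have "\<dots> \<le> ennreal a * ennreal (L powr p) + ennreal ((1 - 1 / p) * L)"
    using abs_moment_le_powr_iff[OF fin _ less_imp_le[OF L]] p \<open>0 < e\<close>
    by (intro add_mono mult_left_mono order_refl) (simp_all add: L_def)
  also have "\<dots> = ennreal L"
  proof -
    have "a * L powr p = L / p"
      using L p by (simp add: a_def powr_diff)
    then have "a * L powr p + (1 - 1 / p) * L = L"
      by (simp add: algebra_simps)
    then show ?thesis
      using a by (simp flip: ennreal_plus ennreal_mult)
  qed
  finally show "(\<integral>\<^sup>+x. ennreal \<bar>g x\<bar> \<partial>M) \<le> ennreal (Lp_norm p M g) + ennreal e"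
    using \<open>0 < e\<close> by (simp add: L_def Lp_norm_nonneg flip: ennreal_plus)
qed

lemma abs_expectation_le_Lp_norm:
  assumes "integrable M g" and "1 \<le> p" and "abs_moment p M g < \<infinity>"
  shows "\<bar>expectation g\<bar> \<le> Lp_norm p M g"
proof -
  have "\<bar>expectation g\<bar> \<le> expectation (\<lambda>x. \<bar>g x\<bar>)"
    by (rule integral_abs_bound)
  also have "\<dots> = enn2real (\<integral>\<^sup>+x. ennreal \<bar>g x\<bar> \<partial>M)"
    using assms(1) by (subst nn_integral_eq_integral) auto
  also have "\<dots> \<le> Lp_norm p M g"
    using nn_integral_abs_le_Lp_norm[of g p] assms Lp_norm_nonneg[of p M g]
    by (simp add: enn2real_leI)
  finally show ?thesis .
qed

end

definition central_moment :: "real \<Rightarrow> 'a measure \<Rightarrow> ('a \<Rightarrow> real) \<Rightarrow> ennreal" where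
  "central_moment p M f = abs_moment p M (\<lambda>x. f x - integral\<^sup>L M f)"

definition osc :: "real \<Rightarrow> 'a measure \<Rightarrow> ('a \<Rightarrow> real) \<Rightarrow> real" where
  "osc p M f = Lp_norm p M (\<lambda>x. f x - integral\<^sup>L M f)"

lemma osc_nonneg: "0 \<le> osc p M f"
  by (simp add: osc_def Lp_norm_nonneg)

lemma osc_eq_central_moment: "osc p M f = enn2real (central_moment p M f) powr (1 / p)"
  by (simp add: osc_def Lp_norm_def central_moment_def)

lemma
  assumes f: "integrable M f" and g: "integrable M g" and p: "1 \<le> p"
    and "central_moment p M f < \<infinity>" and "central_moment p M g < \<infinity>"
  shows central_moment_add_less_top: "central_moment p M (\<lambda>x. f x + g x) < \<infinity>"
    and osc_add_le: "osc p M (\<lambda>x. f x + g x) \<le> osc p M f + osc p M g"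
proof -
  have centered: "(\<lambda>x. f x + g x - integral\<^sup>L M (\<lambda>x. f x + g x))
      = (\<lambda>x. (f x - integral\<^sup>L M f) + (g x - integral\<^sup>L M g))"
    using f g by auto
  show "central_moment p M (\<lambda>x. f x + g x) < \<infinity>"
    using assms unfolding central_moment_def centered by (intro abs_moment_add_less_top) auto
  show "osc p M (\<lambda>x. f x + g x) \<le> osc p M f + osc p M g"
    using assms unfolding central_moment_def osc_def centered by (intro Lp_norm_add_le) auto
qed

lemma
  assumes "integrable M f" and "0 < p"
  shows central_moment_cmult: "central_moment p M (\<lambda>x. c * f x) = ennreal (\<bar>c\<bar> powr p) * central_moment p M f"
    and osc_cmult: "osc p M (\<lambda>x. c * f x) = \<bar>c\<bar> * osc p M f"
proof -
  have centered: "(\<lambda>x. c * f x - integral\<^sup>L M (\<lambda>x. c * f x)) = (\<lambda>x. c * (f x - integral\<^sup>L M f))"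
    by (simp add: algebra_simps)
  show "central_moment p M (\<lambda>x. c * f x) = ennreal (\<bar>c\<bar> powr p) * central_moment p M f"
    using assms unfolding central_moment_def centered by (intro abs_moment_cmult) auto
  show "osc p M (\<lambda>x. c * f x) = \<bar>c\<bar> * osc p M f"
    using assms unfolding osc_def centered by (intro Lp_norm_cmult) auto
qed

lemma (in prob_space)
  assumes f: "integrable M f" and p: "1 \<le> p" and fin: "central_moment p M f < \<infinity>"
  shows central_moment_abs_less_top: "central_moment p M (\<lambda>x. \<bar>f x\<bar>) < \<infinity>"
    and osc_abs_le: "osc p M (\<lambda>x. \<bar>f x\<bar>) \<le> 2 * osc p M f"
proof -
  txt \<open>\<open>h\<close> is dominated by \<open>f - E f\<close>, and \<open>\<bar>f\<bar> - E \<bar>f\<bar>\<close> differs from \<open>h\<close> by the constant \<open>E h\<close>.\<close>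
  define h where "h = (\<lambda>x. \<bar>f x\<bar> - \<bar>expectation f\<bar>)"
  have h_le: "\<bar>h x\<bar> \<le> \<bar>f x - expectation f\<bar>" for x
    by (simp add: h_def abs_triangle_ineq3)
  have h_int: "integrable M h"
    unfolding h_def using f by auto
  have "abs_moment p M h \<le> central_moment p M f"
    unfolding central_moment_def using h_le p by (intro abs_moment_mono) auto
  then have h_fin: "abs_moment p M h < \<infinity>"
    using fin by (rule le_less_trans)
  have h_osc: "Lp_norm p M h \<le> osc p M f"
    using h_le p fin unfolding osc_def central_moment_def by (intro Lp_norm_mono) auto
  have "expectation h = expectation (\<lambda>x. \<bar>f x\<bar>) - \<bar>expectation f\<bar>"
    unfolding h_def using f by (simp add: prob_space)
  then have centered: "(\<lambda>x. \<bar>f x\<bar> - expectation (\<lambda>x. \<bar>f x\<bar>)) = (\<lambda>x. h x + - expectation h)"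
    by (simp add: h_def)
  show "central_moment p M (\<lambda>x. \<bar>f x\<bar>) < \<infinity>"
    unfolding central_moment_def centered
    using h_int h_fin p by (intro abs_moment_add_less_top abs_moment_const_less_top) auto
  have "osc p M (\<lambda>x. \<bar>f x\<bar>) \<le> Lp_norm p M h + Lp_norm p M (\<lambda>_. - expectation h)"
    unfolding osc_def centered
    using h_int h_fin p by (intro Lp_norm_add_le abs_moment_const_less_top) auto
  also have "\<dots> \<le> 2 * Lp_norm p M h"
    using abs_expectation_le_Lp_norm[OF h_int p h_fin] p by (simp add: Lp_norm_const)
  finally show "osc p M (\<lambda>x. \<bar>f x\<bar>) \<le> 2 * osc p M f"
    using h_osc by linarith
qed


lemma shape_sets_lebesgue: "is_shape S \<Longrightarrow> S \<in> sets lebesgue"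
  by (simp add: is_shape_def)

lemma shape_emeasure_eq: "is_shape S \<Longrightarrow> emeasure lebesgue S = ennreal (measure lebesgue S)"
  unfolding is_shape_def by (intro emeasure_eq_ennreal_measure) auto

lemma shape_measure_pos: "is_shape S \<Longrightarrow> 0 < measure lebesgue S"
  unfolding is_shape_def measure_def by (auto simp: enn2real_positive_iff)

definition normalized_lebesgue :: "'a::euclidean_space set \<Rightarrow> 'a measure" where
  "normalized_lebesgue S = density (restrict_space lebesgue S) (\<lambda>_. ennreal (1 / measure lebesgue S))"

lemma sets_normalized_lebesgue [measurable_cong]:
  "sets (normalized_lebesgue S) = sets (restrict_space lebesgue S)"
  by (simp add: normalized_lebesgue_def)

lemma prob_space_normalized_lebesgue:
  assumes "is_shape S"
  shows "prob_space (normalized_lebesgue S)"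
proof
  have "emeasure (restrict_space lebesgue S) S = emeasure lebesgue S"
    using shape_sets_lebesgue[OF assms] by (simp add: emeasure_restrict_space)
  then show "emeasure (normalized_lebesgue S) (space (normalized_lebesgue S)) = 1"
    using shape_emeasure_eq[OF assms] shape_measure_pos[OF assms] shape_sets_lebesgue[OF assms]
    by (simp add: normalized_lebesgue_def emeasure_density_const ennreal_mult[symmetric])
qed

lemma shape_set_integrable_iff:
  fixes f :: "'a::euclidean_space \<Rightarrow> real"
  assumes "is_shape S"
  shows "set_integrable lebesgue S f \<longleftrightarrow> integrable (restrict_space lebesgue S) f"
  using shape_sets_lebesgue[OF assms] unfolding set_integrable_def by (simp add: integrable_restrict_space)

lemma integrable_normalized_lebesgue_iff:
  fixes f :: "'a::euclidean_space \<Rightarrow> real"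
  assumes S: "is_shape S"
  shows "integrable (normalized_lebesgue S) f \<longleftrightarrow> set_integrable lebesgue S f"
proof (cases "f \<in> borel_measurable (restrict_space lebesgue S)")
  case True
  then show ?thesis
    unfolding shape_set_integrable_iff[OF S] normalized_lebesgue_def
    using integrable_density[of f "restrict_space lebesgue S" "\<lambda>_. 1 / measure lebesgue S"]
      shape_measure_pos[OF S] by (simp add: divide_inverse)
next
  case False
  moreover have "f \<in> borel_measurable (restrict_space lebesgue S)"
    if "integrable (normalized_lebesgue S) f"
    using borel_measurable_integrable[OF that] by (simp add: measurable_cong_sets[OF sets_normalized_lebesgue])
  ultimately show ?thesis
    unfolding shape_set_integrable_iff[OF S] by (auto dest: borel_measurable_integrable)
qed

lemma shape_set_integrable_measurable:
  fixes f :: "'a::euclidean_space \<Rightarrow> real"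
  assumes "is_shape S" and "set_integrable lebesgue S f"
  shows "f \<in> borel_measurable (restrict_space lebesgue S)"
  using assms by (simp add: shape_set_integrable_iff borel_measurable_integrable)

lemma integral_normalized_lebesgue:
  fixes f :: "'a::euclidean_space \<Rightarrow> real"
  assumes S: "is_shape S" and f: "set_integrable lebesgue S f"
  shows "integral\<^sup>L (normalized_lebesgue S) f = avg S f"
proof -
  have S': "S \<inter> space lebesgue \<in> sets lebesgue"
    using shape_sets_lebesgue[OF S] by simp
  show ?thesis
    unfolding normalized_lebesgue_def avg_def set_lebesgue_integral_def
    using shape_measure_pos[OF S] shape_set_integrable_measurable[OF S f]
    by (simp add: integral_density integral_restrict_space[OF S'])
qed

lemma nn_integral_normalized_lebesgue:
  assumes S: "is_shape S" and g: "g \<in> borel_measurable (restrict_space lebesgue S)"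
  shows "(\<integral>\<^sup>+x. g x \<partial>normalized_lebesgue S) = (\<integral>\<^sup>+x\<in>S. g x \<partial>lebesgue) / emeasure lebesgue S"
proof -
  have S': "S \<inter> space lebesgue \<in> sets lebesgue"
    using shape_sets_lebesgue[OF S] by simp
  have inverse: "ennreal (1 / measure lebesgue S) = inverse (emeasure lebesgue S)"
    using shape_measure_pos[OF S] shape_emeasure_eq[OF S] by (simp add: inverse_ennreal inverse_eq_divide)
  have "(\<integral>\<^sup>+x. g x \<partial>normalized_lebesgue S)
      = ennreal (1 / measure lebesgue S) * (\<integral>\<^sup>+x. g x \<partial>restrict_space lebesgue S)"
    unfolding normalized_lebesgue_def using g by (simp add: nn_integral_density nn_integral_cmult)
  also have "\<dots> = (\<integral>\<^sup>+x\<in>S. g x \<partial>lebesgue) / emeasure lebesgue S"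
    unfolding inverse nn_integral_restrict_space[OF S'] by (simp add: divide_ennreal_def mult.commute)
  finally show ?thesis .
qed

lemma mean_osc_eq_central_moment:
  fixes f :: "'a::euclidean_space \<Rightarrow> real"
  assumes S: "is_shape S" and f: "set_integrable lebesgue S f"
  shows "mean_osc p S f = central_moment p (normalized_lebesgue S) f"
proof -
  have "(\<lambda>x. ennreal (\<bar>f x - avg S f\<bar> powr p)) \<in> borel_measurable (restrict_space lebesgue S)"
    using shape_set_integrable_measurable[OF S f] by measurable
  then show ?thesis
    unfolding mean_osc_def central_moment_def abs_moment_def integral_normalized_lebesgue[OF S f]
    by (simp add: nn_integral_normalized_lebesgue[OF S])
qed

context
  fixes p :: real and \<SS> :: "'a::euclidean_space set set"
  assumes p: "1 \<le> p" and shapes: "\<And>S. S \<in> \<SS> \<Longrightarrow> is_shape S"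
begin

lemma in_BMO_iff:
  "in_BMO p \<SS> f \<longleftrightarrow> (\<forall>S\<in>\<SS>. integrable (normalized_lebesgue S) f) \<and>
     (\<exists>C. \<forall>S\<in>\<SS>. central_moment p (normalized_lebesgue S) f \<le> ennreal C)"
  unfolding in_BMO_def
  using integrable_normalized_lebesgue_iff[OF shapes] mean_osc_eq_central_moment[OF shapes]
  by metis

lemma BMO_norm_eq_SUP_osc:
  assumes "\<And>S. S \<in> \<SS> \<Longrightarrow> integrable (normalized_lebesgue S) f"
  shows "BMO_norm p \<SS> f = (SUP S\<in>\<SS>. osc p (normalized_lebesgue S) f)"
  unfolding BMO_norm_def osc_eq_central_moment
  using assms integrable_normalized_lebesgue_iff[OF shapes] mean_osc_eq_central_moment[OF shapes]
  by (metis (no_types, lifting) SUP_cong)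

lemma in_BMO_D:
  assumes f: "in_BMO p \<SS> f" and S: "S \<in> \<SS>"
  shows "integrable (normalized_lebesgue S) f \<and> central_moment p (normalized_lebesgue S) f < \<infinity>
    \<and> osc p (normalized_lebesgue S) f \<le> BMO_norm p \<SS> f"
proof -
  obtain C where C: "\<And>S. S \<in> \<SS> \<Longrightarrow> central_moment p (normalized_lebesgue S) f \<le> ennreal C"
    and int: "\<And>S. S \<in> \<SS> \<Longrightarrow> integrable (normalized_lebesgue S) f"
    using f unfolding in_BMO_iff by blast
  have "osc p (normalized_lebesgue T) f \<le> max C 0 powr (1 / p)" if "T \<in> \<SS>" for T
  proof -
    have "central_moment p (normalized_lebesgue T) f \<le> ennreal (max C 0)"
      using C[OF that] by (rule order_trans) (simp add: ennreal_leI)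
    then have "enn2real (central_moment p (normalized_lebesgue T) f) \<le> max C 0"
      by (simp add: enn2real_leI)
    then show ?thesis
      unfolding osc_eq_central_moment using p by (intro powr_mono2) auto
  qed
  then have "bdd_above ((\<lambda>S. osc p (normalized_lebesgue S) f) ` \<SS>)"
    by (intro bdd_aboveI2)
  then have "osc p (normalized_lebesgue S) f \<le> BMO_norm p \<SS> f"
    using cSUP_upper[OF S] BMO_norm_eq_SUP_osc[OF int] by simp
  moreover have "central_moment p (normalized_lebesgue S) f < \<infinity>"
    using C[OF S] by (simp add: le_less_trans)
  ultimately show ?thesis
    using int[OF S] by blast
qed

lemma
  assumes bound: "\<And>S. S \<in> \<SS> \<Longrightarrow> integrable (normalized_lebesgue S) f
    \<and> central_moment p (normalized_lebesgue S) f < \<infinity> \<and> osc p (normalized_lebesgue S) f \<le> K"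
  shows in_BMO_I: "in_BMO p \<SS> f"
    and BMO_norm_le: "\<SS> \<noteq> {} \<Longrightarrow> BMO_norm p \<SS> f \<le> K"
proof -
  have "central_moment p (normalized_lebesgue S) f \<le> ennreal (max K 0 powr p)" if "S \<in> \<SS>" for S
    unfolding central_moment_def
    using bound[OF that] p by (subst abs_moment_le_powr_iff) (auto simp: central_moment_def osc_def)
  then show "in_BMO p \<SS> f"
    unfolding in_BMO_iff using bound by blast
  have int: "\<And>S. S \<in> \<SS> \<Longrightarrow> integrable (normalized_lebesgue S) f"
    using bound by blast
  show "BMO_norm p \<SS> f \<le> K" if "\<SS> \<noteq> {}"
    using BMO_norm_eq_SUP_osc[OF int] cSUP_least[of \<SS> "\<lambda>S. osc p (normalized_lebesgue S) f" K] that bound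
    by auto
qed

lemma BMO_norm_nonneg:
  assumes "\<SS> \<noteq> {}" and "in_BMO p \<SS> f"
  shows "0 \<le> BMO_norm p \<SS> f"
proof -
  obtain S where "S \<in> \<SS>"
    using assms(1) by blast
  then show ?thesis
    using in_BMO_D[OF assms(2)] osc_nonneg[of p _ f] by (meson order_trans)
qed

lemma
  assumes f: "in_BMO p \<SS> f" and g: "in_BMO p \<SS> g"
  shows in_BMO_add: "in_BMO p \<SS> (\<lambda>x. f x + g x)"
    and BMO_norm_add_le: "\<SS> \<noteq> {} \<Longrightarrow> BMO_norm p \<SS> (\<lambda>x. f x + g x) \<le> BMO_norm p \<SS> f + BMO_norm p \<SS> g"
proof -
  have bound: "integrable (normalized_lebesgue S) (\<lambda>x. f x + g x)
      \<and> central_moment p (normalized_lebesgue S) (\<lambda>x. f x + g x) < \<infinity>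
      \<and> osc p (normalized_lebesgue S) (\<lambda>x. f x + g x) \<le> BMO_norm p \<SS> f + BMO_norm p \<SS> g"
    if "S \<in> \<SS>" for S
    using in_BMO_D[OF f that] in_BMO_D[OF g that] p
      central_moment_add_less_top[of "normalized_lebesgue S" f g p] osc_add_le[of "normalized_lebesgue S" f g p]
    by auto
  show "in_BMO p \<SS> (\<lambda>x. f x + g x)"
    by (rule in_BMO_I[OF bound])
  show "\<SS> \<noteq> {} \<Longrightarrow> BMO_norm p \<SS> (\<lambda>x. f x + g x) \<le> BMO_norm p \<SS> f + BMO_norm p \<SS> g"
    by (rule BMO_norm_le[OF bound])
qed

lemma
  assumes f: "in_BMO p \<SS> f"
  shows in_BMO_cmult: "in_BMO p \<SS> (\<lambda>x. c * f x)"
    and BMO_norm_cmult_le: "\<SS> \<noteq> {} \<Longrightarrow> BMO_norm p \<SS> (\<lambda>x. c * f x) \<le> \<bar>c\<bar> * BMO_norm p \<SS> f"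
proof -
  have bound: "integrable (normalized_lebesgue S) (\<lambda>x. c * f x)
      \<and> central_moment p (normalized_lebesgue S) (\<lambda>x. c * f x) < \<infinity>
      \<and> osc p (normalized_lebesgue S) (\<lambda>x. c * f x) \<le> \<bar>c\<bar> * BMO_norm p \<SS> f"
    if "S \<in> \<SS>" for S
    using in_BMO_D[OF f that] p central_moment_cmult[of "normalized_lebesgue S" f p c]
      osc_cmult[of "normalized_lebesgue S" f p c]
    by (auto simp: ennreal_mult_less_top intro: mult_left_mono)
  show "in_BMO p \<SS> (\<lambda>x. c * f x)"
    by (rule in_BMO_I[OF bound])
  show "\<SS> \<noteq> {} \<Longrightarrow> BMO_norm p \<SS> (\<lambda>x. c * f x) \<le> \<bar>c\<bar> * BMO_norm p \<SS> f"
    by (rule BMO_norm_le[OF bound])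
qed

lemma
  assumes f: "in_BMO p \<SS> f" and g: "in_BMO p \<SS> g"
  shows in_BMO_diff: "in_BMO p \<SS> (\<lambda>x. f x - g x)"
    and BMO_norm_diff_le: "\<SS> \<noteq> {} \<Longrightarrow> BMO_norm p \<SS> (\<lambda>x. f x - g x) \<le> BMO_norm p \<SS> f + BMO_norm p \<SS> g"
proof -
  have diff: "(\<lambda>x. f x - g x) = (\<lambda>x. f x + (-1) * g x)"
    by simp
  have g': "in_BMO p \<SS> (\<lambda>x. (-1) * g x)"
    using in_BMO_cmult[OF g] .
  show "in_BMO p \<SS> (\<lambda>x. f x - g x)"
    unfolding diff using in_BMO_add[OF f g'] .
  show "BMO_norm p \<SS> (\<lambda>x. f x - g x) \<le> BMO_norm p \<SS> f + BMO_norm p \<SS> g" if "\<SS> \<noteq> {}"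
    unfolding diff using BMO_norm_add_le[OF f g' that] BMO_norm_cmult_le[OF g that, of "-1"] by simp
qed

lemma
  assumes f: "in_BMO p \<SS> f"
  shows in_BMO_abs: "in_BMO p \<SS> (\<lambda>x. \<bar>f x\<bar>)"
    and BMO_norm_abs_le: "\<SS> \<noteq> {} \<Longrightarrow> BMO_norm p \<SS> (\<lambda>x. \<bar>f x\<bar>) \<le> 2 * BMO_norm p \<SS> f"
proof -
  have bound: "integrable (normalized_lebesgue S) (\<lambda>x. \<bar>f x\<bar>)
      \<and> central_moment p (normalized_lebesgue S) (\<lambda>x. \<bar>f x\<bar>) < \<infinity>
      \<and> osc p (normalized_lebesgue S) (\<lambda>x. \<bar>f x\<bar>) \<le> 2 * BMO_norm p \<SS> f"
    if "S \<in> \<SS>" for S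
  proof -
    interpret prob_space "normalized_lebesgue S"
      using prob_space_normalized_lebesgue[OF shapes[OF that]] .
    show ?thesis
      using in_BMO_D[OF f that] p central_moment_abs_less_top[of f p] osc_abs_le[of f p] by auto
  qed
  show "in_BMO p \<SS> (\<lambda>x. \<bar>f x\<bar>)"
    by (rule in_BMO_I[OF bound])
  show "\<SS> \<noteq> {} \<Longrightarrow> BMO_norm p \<SS> (\<lambda>x. \<bar>f x\<bar>) \<le> 2 * BMO_norm p \<SS> f"
    by (rule BMO_norm_le[OF bound])
qed

lemma BMO_norm_abs_div_le_c_abs:
  assumes ne: "\<SS> \<noteq> {}" and f: "in_BMO p \<SS> f" and pos: "0 < BMO_norm p \<SS> f"
  shows "BMO_norm p \<SS> (\<lambda>x. \<bar>f x\<bar>) / BMO_norm p \<SS> f \<le> c_abs p \<SS>"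
  unfolding c_abs_def
proof (rule cInf_greatest)
  show "{c. \<forall>f. in_BMO p \<SS> f \<longrightarrow> BMO_norm p \<SS> (\<lambda>x. \<bar>f x\<bar>) \<le> c * BMO_norm p \<SS> f} \<noteq> {}"
    using BMO_norm_abs_le[OF _ ne] by blast
  show "BMO_norm p \<SS> (\<lambda>x. \<bar>f x\<bar>) / BMO_norm p \<SS> f \<le> c"
    if "c \<in> {c. \<forall>f. in_BMO p \<SS> f \<longrightarrow> BMO_norm p \<SS> (\<lambda>x. \<bar>f x\<bar>) \<le> c * BMO_norm p \<SS> f}" for c
    using that f pos by (simp add: divide_le_eq)
qed

lemma BMO_norm_abs_le_c_abs:
  assumes ne: "\<SS> \<noteq> {}" and f: "in_BMO p \<SS> f"
  shows "BMO_norm p \<SS> (\<lambda>x. \<bar>f x\<bar>) \<le> c_abs p \<SS> * BMO_norm p \<SS> f"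
proof (cases "0 < BMO_norm p \<SS> f")
  case True
  then show ?thesis
    using BMO_norm_abs_div_le_c_abs[OF ne f] by (simp add: divide_le_eq mult.commute)
next
  case False
  then show ?thesis
    using BMO_norm_abs_le[OF f ne] BMO_norm_nonneg[OF ne f] by simp
qed

lemma c_abs_nonneg:
  assumes ne: "\<SS> \<noteq> {}" and f: "in_BMO p \<SS> f" and pos: "0 < BMO_norm p \<SS> f"
  shows "0 \<le> c_abs p \<SS>"
proof -
  have "0 \<le> BMO_norm p \<SS> (\<lambda>x. \<bar>f x\<bar>) / BMO_norm p \<SS> f"
    using BMO_norm_nonneg[OF ne in_BMO_abs[OF f]] pos by simp
  then show ?thesis
    using BMO_norm_abs_div_le_c_abs[OF ne f pos] by linarith
qed

lemma BMO_norm_abs_diff_le: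
  assumes ne: "\<SS> \<noteq> {}" and f: "in_BMO p \<SS> f" and g: "in_BMO p \<SS> g"
  shows "BMO_norm p \<SS> (\<lambda>x. \<bar>f x - g x\<bar>) \<le> c_abs p \<SS> * (BMO_norm p \<SS> f + BMO_norm p \<SS> g)"
proof (cases "0 \<le> c_abs p \<SS>")
  case True
  then show ?thesis
    using BMO_norm_abs_le_c_abs[OF ne in_BMO_diff[OF f g]] BMO_norm_diff_le[OF f g ne]
    by (meson mult_left_mono order_trans)
next
  case False
  txt \<open>The infimum defining \<^const>\<open>c_abs\<close> can only be negative (or junk) if every seminorm vanishes.\<close>
  then have "\<not> 0 < BMO_norm p \<SS> f" "\<not> 0 < BMO_norm p \<SS> g"
    using c_abs_nonneg[OF ne f] c_abs_nonneg[OF ne g] by auto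
  then have "BMO_norm p \<SS> f = 0" "BMO_norm p \<SS> g = 0"
    using BMO_norm_nonneg[OF ne f] BMO_norm_nonneg[OF ne g] by auto
  then have "BMO_norm p \<SS> (\<lambda>x. f x - g x) = 0"
    using BMO_norm_diff_le[OF f g ne] BMO_norm_nonneg[OF ne in_BMO_diff[OF f g]] by simp
  then show ?thesis
    using BMO_norm_abs_le_c_abs[OF ne in_BMO_diff[OF f g]] \<open>BMO_norm p \<SS> f = 0\<close> \<open>BMO_norm p \<SS> g = 0\<close>
    by simp
qed

lemma
  assumes f: "in_BMO p \<SS> f" and g: "in_BMO p \<SS> g" and e: "\<bar>e\<bar> = 1 / 2"
  shows in_BMO_mean_plus_abs_diff: "in_BMO p \<SS> (\<lambda>x. 1 / 2 * (f x + g x) + e * \<bar>f x - g x\<bar>)"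
    and BMO_norm_mean_plus_abs_diff_le: "\<SS> \<noteq> {} \<Longrightarrow>
      BMO_norm p \<SS> (\<lambda>x. 1 / 2 * (f x + g x) + e * \<bar>f x - g x\<bar>)
        \<le> (1 + c_abs p \<SS>) / 2 * (BMO_norm p \<SS> f + BMO_norm p \<SS> g)"
proof -
  have sum: "in_BMO p \<SS> (\<lambda>x. f x + g x)" and dist: "in_BMO p \<SS> (\<lambda>x. \<bar>f x - g x\<bar>)"
    using in_BMO_add[OF f g] in_BMO_abs[OF in_BMO_diff[OF f g]] .
  show "in_BMO p \<SS> (\<lambda>x. 1 / 2 * (f x + g x) + e * \<bar>f x - g x\<bar>)"
    using in_BMO_add[OF in_BMO_cmult[OF sum] in_BMO_cmult[OF dist]] .
  assume ne: "\<SS> \<noteq> {}"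
  have "BMO_norm p \<SS> (\<lambda>x. 1 / 2 * (f x + g x)) \<le> 1 / 2 * BMO_norm p \<SS> (\<lambda>x. f x + g x)"
    using BMO_norm_cmult_le[OF sum ne, of "1 / 2"] by simp
  moreover have "BMO_norm p \<SS> (\<lambda>x. e * \<bar>f x - g x\<bar>) \<le> 1 / 2 * BMO_norm p \<SS> (\<lambda>x. \<bar>f x - g x\<bar>)"
    using BMO_norm_cmult_le[OF dist ne, of e] e by simp
  ultimately have "BMO_norm p \<SS> (\<lambda>x. 1 / 2 * (f x + g x) + e * \<bar>f x - g x\<bar>)
      \<le> 1 / 2 * BMO_norm p \<SS> (\<lambda>x. f x + g x) + 1 / 2 * BMO_norm p \<SS> (\<lambda>x. \<bar>f x - g x\<bar>)"
    using BMO_norm_add_le[OF in_BMO_cmult[OF sum, of "1 / 2"] in_BMO_cmult[OF dist, of e] ne] by linarith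
  also have "\<dots> \<le> 1 / 2 * (BMO_norm p \<SS> f + BMO_norm p \<SS> g)
      + 1 / 2 * (c_abs p \<SS> * (BMO_norm p \<SS> f + BMO_norm p \<SS> g))"
    using BMO_norm_add_le[OF f g ne] BMO_norm_abs_diff_le[OF ne f g] by (intro add_mono mult_left_mono) auto
  also have "\<dots> = (1 + c_abs p \<SS>) / 2 * (BMO_norm p \<SS> f + BMO_norm p \<SS> g)"
    by (simp add: algebra_simps)
  finally show "BMO_norm p \<SS> (\<lambda>x. 1 / 2 * (f x + g x) + e * \<bar>f x - g x\<bar>)
      \<le> (1 + c_abs p \<SS>) / 2 * (BMO_norm p \<SS> f + BMO_norm p \<SS> g)" .
qed

end

theorem proposition6p1:
  fixes \<Omega> :: "'a::euclidean_space set" and \<SS> :: "'a set set"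
    and p :: real and f1 f2 :: "'a \<Rightarrow> real"
  assumes "is_domain \<Omega>" and "basis_of_shapes \<SS> \<Omega>"
    and "1 \<le> p"
    and "in_BMO p \<SS> f1" and "in_BMO p \<SS> f2"
  shows "in_BMO p \<SS> (\<lambda>x. max (f1 x) (f2 x))
    \<and> in_BMO p \<SS> (\<lambda>x. min (f1 x) (f2 x))
    \<and> BMO_norm p \<SS> (\<lambda>x. max (f1 x) (f2 x))
           \<le> (1 + c_abs p \<SS>) / 2 * (BMO_norm p \<SS> f1 + BMO_norm p \<SS> f2)
    \<and> BMO_norm p \<SS> (\<lambda>x. min (f1 x) (f2 x))
           \<le> (1 + c_abs p \<SS>) / 2 * (BMO_norm p \<SS> f1 + BMO_norm p \<SS> f2)"
proof -
  have shapes: "\<And>S. S \<in> \<SS> \<Longrightarrow> is_shape S" and ne: "\<SS> \<noteq> {}"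
    using assms(1,2) by (auto simp: basis_of_shapes_def is_domain_def)
  have max_eq: "(\<lambda>x. max (f1 x) (f2 x)) = (\<lambda>x. 1 / 2 * (f1 x + f2 x) + 1 / 2 * \<bar>f1 x - f2 x\<bar>)"
    and min_eq: "(\<lambda>x. min (f1 x) (f2 x)) = (\<lambda>x. 1 / 2 * (f1 x + f2 x) + - 1 / 2 * \<bar>f1 x - f2 x\<bar>)"
    by (auto simp: max_def min_def field_simps)
  have half: "\<bar>1 / 2\<bar> = (1 / 2 :: real)" and neg_half: "\<bar>- 1 / 2\<bar> = (1 / 2 :: real)"
    by simp_all
  note hyps = assms(3) shapes assms(4,5)
  show ?thesis
    unfolding max_eq min_eq
    using in_BMO_mean_plus_abs_diff[OF hyps half] in_BMO_mean_plus_abs_diff[OF hyps neg_half]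
      BMO_norm_mean_plus_abs_diff_le[OF hyps half ne] BMO_norm_mean_plus_abs_diff_le[OF hyps neg_half ne]
    by blast
qed

end
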